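(* Let $N_1,N_2,N_3\in\mathbb{N}$ with $(N_1,N_2)\neq(0,0)$, and let $\mathcal{G}=\mathcal{G}_{\mathrm{KMA}}(N_1,N_2,N_3)$. Then $\mathcal{G}-\mathcal{G}=\{-\max\mathcal{G},\ldots,\max\mathcal{G}\}$.
   Context: For $a\in\mathbb{Z}$, $b\in\mathbb{N}_+$, $c\in\mathbb{Z}$, $\{a:b:c\}=\{a,a+b,\ldots\}\cap(-\infty,c]$ (empty if $c<a$), $\{a:c\}=\{a:1:c\}$; set sums/differences are elementwise, $\mathcal{A}+c=\{a+c\}$. For $N_1,N_2\in\mathbb{N}$: $\mathcal{D}_1=\{0:N_1-1\}$, $\mathcal{D}_2=\{0:N_1+1:(N_2-1)(N_1+1)\}$, $\mathcal{D}_{\mathrm{CNA}}=\mathcal{D}_1\cup(\mathcal{D}_2+N_1)\cup(\mathcal{D}_1+N_2(N_1+1))$, $M=\max\mathcal{D}_{\mathrm{CNA}}$. For $N_3\in\mathbb{N}$: $\mathcal{D}_3=\{jN_1: j=0,\ldots,N_1\}+\{(i-1)(N_1^2+M+1): i=1,\ldots,N_3\}$ (empty if $N_3=0$). The Kl{\o}ve--Mossige array is $\mathcal{G}_{\mathrm{KMA}}(N_1,N_2,N_3)=\mathcal{D}_{\mathrm{CNA}}\cup(\mathcal{D}_3+2M+1)$. *)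

theory Defs
  imports Main
begin

definition aprog :: "int \<Rightarrow> int \<Rightarrow> int \<Rightarrow> int set" where
  "aprog a b c = {x. \<exists>k::nat. x = a + int k * b \<and> x \<le> c}"

definition shift :: "int set \<Rightarrow> int \<Rightarrow> int set" where
  "shift A c = (\<lambda>x. x + c) ` A"

definition setsum :: "int set \<Rightarrow> int set \<Rightarrow> int set" where
  "setsum A B = {a + b | a b. a \<in> A \<and> b \<in> B}"

definition setdiff :: "int set \<Rightarrow> int set \<Rightarrow> int set" where
  "setdiff A B = {a - b | a b. a \<in> A \<and> b \<in> B}"

definition D1 :: "nat \<Rightarrow> int set" where
  "D1 N1 = aprog 0 1 (int N1 - 1)"

definition D2 :: "nat \<Rightarrow> nat \<Rightarrow> int set" where
  "D2 N1 N2 = aprog 0 (int N1 + 1) ((int N2 - 1) * (int N1 + 1))"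

definition DCNA :: "nat \<Rightarrow> nat \<Rightarrow> int set" where
  "DCNA N1 N2 = D1 N1 \<union> shift (D2 N1 N2) (int N1) \<union> shift (D1 N1) (int N2 * (int N1 + 1))"

definition MCNA :: "nat \<Rightarrow> nat \<Rightarrow> int" where
  "MCNA N1 N2 = Max (DCNA N1 N2)"

definition D3 :: "nat \<Rightarrow> nat \<Rightarrow> nat \<Rightarrow> int set" where
  "D3 N1 N2 N3 = setsum {int j * int N1 | j. j \<le> N1}
     {(int i - 1) * (int N1 ^ 2 + MCNA N1 N2 + 1) | i. 1 \<le> i \<and> i \<le> N3}"

definition GKMA :: "nat \<Rightarrow> nat \<Rightarrow> nat \<Rightarrow> int set" where
  "GKMA N1 N2 N3 = DCNA N1 N2 \<union> shift (D3 N1 N2 N3) (2 * MCNA N1 N2 + 1)"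

end

theory Submission
  imports Defs
begin

text \<open>
  Write n = N1, m = N2 and M = m(n+1) + n - 1 for the maximum of the CNA part.
  Reducing d in [0, M] modulo n+1 writes it as a difference of two elements of the CNA part:
  an element n + q(n+1) of the progression minus n - r, or an element of the top block minus 0.
  The same reduction shows that every t in [-M, n^2] is jn - x with 0 \<le> j \<le> n and x in the
  CNA part. The i-th translate of {jn | 0 \<le> j \<le> n} in the shifted D3 starts at
  2M + 1 + iP, P = n^2 + M + 1, so reducing d - M - 1 modulo P covers every d between M and
  the maximum M + N3 P; negation gives the rest.
\<close>

lemma setdiff_uminus: "x \<in> setdiff A A \<Longrightarrow> - x \<in> setdiff A A"
  unfolding setdiff_def by force

lemma setdiff_self_eq_symmetric_interval:
  fixes A :: "int set"
  assumes "A \<subseteq> {0..M}" and "M \<in> A" and "{0..M} \<subseteq> setdiff A A"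
  shows "setdiff A A = {- Max A .. Max A}"
proof -
  have "Max A = M"
    using assms(1,2) by (intro Max_eqI) (auto intro: finite_subset)
  moreover have "setdiff A A \<subseteq> {-M..M}"
    unfolding setdiff_def by (auto dest!: subsetD[OF assms(1)])
  moreover have "y \<in> setdiff A A" if "y \<in> {-M..M}" for y
  proof (cases "0 \<le> y")
    case False
    then have "- y \<in> setdiff A A" using that assms(3) by auto
    then show ?thesis using setdiff_uminus[of "- y" A] by simp
  qed (use that assms(3) in auto)
  ultimately show ?thesis by auto
qed

lemma quotient_remainder_nonneg:
  fixes d b :: int
  assumes "0 < b" and "0 \<le> d"
  obtains q r where "d = q * b + r" and "0 \<le> q" and "0 \<le> r" and "r < b"
proof
  show "d = d div b * b + d mod b" by simp
  show "0 \<le> d div b" "0 \<le> d mod b" "d mod b < b"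
    using assms by (simp_all add: pos_imp_zdiv_nonneg_iff)
qed

lemma mem_shift_iff: "x \<in> shift A c \<longleftrightarrow> x - c \<in> A"
  unfolding shift_def by force

lemma mem_aprog_iff:
  assumes "0 < b"
  shows "x \<in> aprog a b c \<longleftrightarrow> (\<exists>k. 0 \<le> k \<and> x = a + k * b) \<and> x \<le> c"
proof
  assume "x \<in> aprog a b c"
  then obtain k :: nat where "x = a + int k * b" "x \<le> c" unfolding aprog_def by blast
  then show "(\<exists>k. 0 \<le> k \<and> x = a + k * b) \<and> x \<le> c" by (auto intro!: exI[of _ "int k"])
next
  assume "(\<exists>k. 0 \<le> k \<and> x = a + k * b) \<and> x \<le> c"
  then obtain k where "0 \<le> k" "x = a + k * b" "x \<le> c" by blast
  then show "x \<in> aprog a b c" unfolding aprog_def by (auto intro!: exI[of _ "nat k"])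
qed

lemma mem_D1_iff: "x \<in> D1 N1 \<longleftrightarrow> 0 \<le> x \<and> x < int N1"
  unfolding D1_def mem_aprog_iff[OF zero_less_one] by auto

lemma mem_D2_iff:
  "x \<in> D2 N1 N2 \<longleftrightarrow> (\<exists>k. 0 \<le> k \<and> k < int N2 \<and> x = k * (int N1 + 1))"
proof -
  have "k * (int N1 + 1) \<le> (int N2 - 1) * (int N1 + 1) \<longleftrightarrow> k < int N2" for k
    by (simp add: mult_le_cancel_right add_pos_nonneg)
  then show ?thesis
    unfolding D2_def by (subst mem_aprog_iff) (auto simp: add_pos_nonneg)
qed

lemma mem_DCNA_iff:
  "x \<in> DCNA N1 N2 \<longleftrightarrow>
     0 \<le> x \<and> x < int N1
   \<or> (\<exists>k. 0 \<le> k \<and> k < int N2 \<and> x = int N1 + k * (int N1 + 1))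
   \<or> int N2 * (int N1 + 1) \<le> x \<and> x < int N2 * (int N1 + 1) + int N1"
  unfolding DCNA_def by (auto simp: mem_shift_iff mem_D1_iff mem_D2_iff algebra_simps)

lemma DCNA_subset: "DCNA N1 N2 \<subseteq> {0 .. int N2 * (int N1 + 1) + int N1 - 1}"
proof
  fix x assume "x \<in> DCNA N1 N2"
  moreover have "0 \<le> k * (int N1 + 1) \<and> k * (int N1 + 1) \<le> (int N2 - 1) * (int N1 + 1)"
    if "0 \<le> k" "k < int N2" for k
    using that by (simp add: mult_right_mono)
  ultimately show "x \<in> {0 .. int N2 * (int N1 + 1) + int N1 - 1}"
    unfolding mem_DCNA_iff by (force simp: algebra_simps)
qed

lemma top_mem_DCNA:
  assumes "(N1, N2) \<noteq> (0, 0)"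
  shows "int N2 * (int N1 + 1) + int N1 - 1 \<in> DCNA N1 N2"
  using assms unfolding mem_DCNA_iff
  by (cases "N1 = 0") (auto intro!: exI[of _ "int N2 - 1"])

lemma MCNA_eq:
  assumes "(N1, N2) \<noteq> (0, 0)"
  shows "MCNA N1 N2 = int N2 * (int N1 + 1) + int N1 - 1"
  unfolding MCNA_def using DCNA_subset[of N1 N2] top_mem_DCNA[OF assms]
  by (intro Max_eqI) (auto intro: finite_subset)

lemma MCNA_nonneg:
  assumes "(N1, N2) \<noteq> (0, 0)"
  shows "0 \<le> MCNA N1 N2"
  using assms unfolding MCNA_eq[OF assms] by (cases "N1 = 0") (auto intro: add_nonneg_pos)

lemma DCNA_differences_cover:
  assumes "0 \<le> d" and "d \<le> int N2 * (int N1 + 1) + int N1 - 1"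
  shows "d \<in> setdiff (DCNA N1 N2) (DCNA N1 N2)"
proof -
  let ?n = "int N1" and ?m = "int N2"
  obtain q r where d: "d = q * (?n + 1) + r" and "0 \<le> q" "0 \<le> r" "r \<le> ?n"
    using quotient_remainder_nonneg[of "?n + 1" d] assms(1) by auto
  show ?thesis
  proof (cases "q < ?m")
    case True
    then have "?n + q * (?n + 1) \<in> DCNA N1 N2" "?n - r \<in> DCNA N1 N2"
      using \<open>0 \<le> q\<close> \<open>0 \<le> r\<close> \<open>r \<le> ?n\<close> unfolding mem_DCNA_iff
      by (auto intro: exI[of _ 0] simp: le_less)
    moreover have "d = (?n + q * (?n + 1)) - (?n - r)" using d by simp
    ultimately show ?thesis unfolding setdiff_def by blast
  next
    case False
    then have "?m * (?n + 1) \<le> q * (?n + 1)" by (simp add: mult_right_mono)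
    with d assms(2) \<open>0 \<le> r\<close> have "d - ?m * (?n + 1) \<in> {0..<?n}"
      by (simp only: atLeastLessThan_iff) linarith
    then have "d \<in> DCNA N1 N2" "0 \<in> DCNA N1 N2" unfolding mem_DCNA_iff by auto
    then show ?thesis unfolding setdiff_def by force
  qed
qed

lemma multiples_minus_DCNA_cover:
  assumes "- (int N2 * (int N1 + 1) + int N1 - 1) \<le> t" and "t \<le> int N1 ^ 2"
  shows "\<exists>j x. 0 \<le> j \<and> j \<le> int N1 \<and> x \<in> DCNA N1 N2 \<and> t = j * int N1 - x"
proof (cases "- int N1 < t")
  case True
  let ?n = "int N1"
  have "0 < ?n" using True assms(2) by (cases "N1 = 0") auto
  then obtain j s where js: "t + ?n - 1 = j * ?n + s" "0 \<le> j" "0 \<le> s" "s < ?n"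
    using quotient_remainder_nonneg[of ?n "t + ?n - 1"] True by auto
  have "j * ?n < (?n + 1) * ?n"
    using js assms(2) by (simp add: power2_eq_square algebra_simps)
  then have "j \<le> ?n" using \<open>0 < ?n\<close> by (simp add: mult_less_cancel_right)
  moreover have "j * ?n - t \<in> DCNA N1 N2" using js unfolding mem_DCNA_iff by auto
  ultimately show ?thesis using js(2) by (intro exI[of _ j] exI[of _ "j * ?n - t"]) auto
next
  case False
  let ?n = "int N1" and ?m = "int N2"
  obtain q r where u: "- t - ?n = q * (?n + 1) + r" and "0 \<le> q" "0 \<le> r" "r \<le> ?n"
    using quotient_remainder_nonneg[of "?n + 1" "- t - ?n"] False by auto
  have "q * (?n + 1) < ?m * (?n + 1)" using u assms(1) \<open>0 \<le> r\<close> by (simp add: algebra_simps)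
  then have "q < ?m" by (simp add: mult_less_cancel_right add_pos_nonneg)
  show ?thesis
  proof (cases "q + r < ?m")
    case True
    then have "?n + (q + r) * (?n + 1) \<in> DCNA N1 N2"
      using \<open>0 \<le> q\<close> \<open>0 \<le> r\<close> unfolding mem_DCNA_iff by auto
    moreover have "t = r * ?n - (?n + (q + r) * (?n + 1))" using u by (simp add: algebra_simps)
    ultimately show ?thesis using \<open>0 \<le> r\<close> \<open>r \<le> ?n\<close> by blast
  next
    case False
    \<comment> \<open>the carry \<open>q + r \<ge> m\<close> lands \<open>-t + (m - q - 1) n = mn + q + r\<close> in the top block\<close>
    then have "?m * ?n + q + r \<in> DCNA N1 N2"
      using \<open>q < ?m\<close> \<open>r \<le> ?n\<close> unfolding mem_DCNA_iff by (auto simp: algebra_simps)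
    moreover have "t = (?m - q - 1) * ?n - (?m * ?n + q + r)" using u by (simp add: algebra_simps)
    ultimately show ?thesis using \<open>q < ?m\<close> \<open>r \<le> ?n\<close> False
      by (intro exI[of _ "?m - q - 1"] exI[of _ "?m * ?n + q + r"]) auto
  qed
qed

lemma mem_GKMA_iff:
  "x \<in> GKMA N1 N2 N3 \<longleftrightarrow> x \<in> DCNA N1 N2 \<or>
     (\<exists>j i. 0 \<le> j \<and> j \<le> int N1 \<and> 0 \<le> i \<and> i < int N3 \<and>
        x = j * int N1 + i * (int N1 ^ 2 + MCNA N1 N2 + 1) + (2 * MCNA N1 N2 + 1))"
proof -
  have "y \<in> D3 N1 N2 N3 \<longleftrightarrow> (\<exists>j i. 0 \<le> j \<and> j \<le> int N1 \<and> 0 \<le> i \<and> i < int N3 \<and>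
          y = j * int N1 + i * (int N1 ^ 2 + MCNA N1 N2 + 1))" for y
  proof
    assume "y \<in> D3 N1 N2 N3"
    then obtain j i :: nat where "j \<le> N1" "1 \<le> i" "i \<le> N3"
      "y = int j * int N1 + (int i - 1) * (int N1 ^ 2 + MCNA N1 N2 + 1)"
      unfolding D3_def setsum_def by blast
    then show "\<exists>j i. 0 \<le> j \<and> j \<le> int N1 \<and> 0 \<le> i \<and> i < int N3 \<and>
          y = j * int N1 + i * (int N1 ^ 2 + MCNA N1 N2 + 1)"
      by (intro exI[of _ "int j"] exI[of _ "int i - 1"]) auto
  next
    assume "\<exists>j i. 0 \<le> j \<and> j \<le> int N1 \<and> 0 \<le> i \<and> i < int N3 \<and>
          y = j * int N1 + i * (int N1 ^ 2 + MCNA N1 N2 + 1)"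
    then obtain j i where "0 \<le> j" "j \<le> int N1" "0 \<le> i" "i < int N3"
      "y = j * int N1 + i * (int N1 ^ 2 + MCNA N1 N2 + 1)"
      by blast
    then have "nat j \<le> N1" "1 \<le> nat i + 1" "nat i + 1 \<le> N3"
      "y = int (nat j) * int N1 + (int (nat i + 1) - 1) * (int N1 ^ 2 + MCNA N1 N2 + 1)"
      by auto
    then show "y \<in> D3 N1 N2 N3"
      unfolding D3_def setsum_def by blast
  qed
  then show ?thesis
    unfolding GKMA_def Un_iff mem_shift_iff by (simp add: diff_eq_eq)
qed

lemma GKMA_subset:
  assumes "(N1, N2) \<noteq> (0, 0)"
  shows "GKMA N1 N2 N3 \<subseteq> {0 .. MCNA N1 N2 + int N3 * (int N1 ^ 2 + MCNA N1 N2 + 1)}"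
proof
  fix x assume x: "x \<in> GKMA N1 N2 N3"
  let ?n = "int N1" and ?M = "MCNA N1 N2"
  let ?P = "?n ^ 2 + ?M + 1"
  have M: "DCNA N1 N2 \<subseteq> {0..?M}" using DCNA_subset MCNA_eq[OF assms] by simp
  have "0 \<le> ?M" using MCNA_nonneg[OF assms] .
  show "x \<in> {0 .. ?M + int N3 * ?P}"
  proof (cases "x \<in> DCNA N1 N2")
    case True
    moreover have "0 \<le> int N3 * ?P" using \<open>0 \<le> ?M\<close> by simp
    moreover have "x \<in> {0..?M}" using M True by blast
    ultimately show ?thesis unfolding atLeastAtMost_iff by (intro conjI) linarith+
  next
    case False
    then obtain j i where "0 \<le> j" "j \<le> ?n" "0 \<le> i" "i < int N3"
      and x: "x = j * ?n + i * ?P + (2 * ?M + 1)"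
      using x unfolding mem_GKMA_iff by blast
    then have "j * ?n \<le> ?n * ?n" "i * ?P \<le> (int N3 - 1) * ?P"
      using \<open>0 \<le> ?M\<close> by (simp_all add: mult_right_mono)
    moreover have "0 \<le> j * ?n" "0 \<le> i * ?P"
      using \<open>0 \<le> j\<close> \<open>0 \<le> i\<close> \<open>0 \<le> ?M\<close> by simp_all
    ultimately show ?thesis
      using x \<open>0 \<le> ?M\<close> by (simp add: power2_eq_square algebra_simps)
  qed
qed

lemma top_mem_GKMA:
  assumes "(N1, N2) \<noteq> (0, 0)"
  shows "MCNA N1 N2 + int N3 * (int N1 ^ 2 + MCNA N1 N2 + 1) \<in> GKMA N1 N2 N3"
proof (cases "N3 = 0")
  case True
  then show ?thesis
    using top_mem_DCNA[OF assms] MCNA_eq[OF assms] unfolding mem_GKMA_iff by simp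
next
  case False
  let ?n = "int N1" and ?M = "MCNA N1 N2"
  have "?M + int N3 * (?n ^ 2 + ?M + 1)
      = ?n * ?n + (int N3 - 1) * (?n ^ 2 + ?M + 1) + (2 * ?M + 1)"
    by (simp add: power2_eq_square algebra_simps)
  then show ?thesis
    using False unfolding mem_GKMA_iff
    by (intro disjI2 exI[of _ ?n] exI[of _ "int N3 - 1"]) simp
qed

lemma GKMA_differences_cover:
  assumes "(N1, N2) \<noteq> (0, 0)"
  shows "{0 .. MCNA N1 N2 + int N3 * (int N1 ^ 2 + MCNA N1 N2 + 1)}
           \<subseteq> setdiff (GKMA N1 N2 N3) (GKMA N1 N2 N3)"
proof
  fix d assume d: "d \<in> {0 .. MCNA N1 N2 + int N3 * (int N1 ^ 2 + MCNA N1 N2 + 1)}"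
  let ?n = "int N1" and ?M = "MCNA N1 N2"
  let ?P = "?n ^ 2 + ?M + 1"
  have DCNA_GKMA: "y \<in> DCNA N1 N2 \<Longrightarrow> y \<in> GKMA N1 N2 N3" for y
    unfolding mem_GKMA_iff by blast
  have "0 \<le> ?M" using MCNA_nonneg[OF assms] .
  show "d \<in> setdiff (GKMA N1 N2 N3) (GKMA N1 N2 N3)"
  proof (cases "d \<le> ?M")
    case True
    then have "d \<in> setdiff (DCNA N1 N2) (DCNA N1 N2)"
      using d DCNA_differences_cover MCNA_eq[OF assms] by simp
    then show ?thesis unfolding setdiff_def using DCNA_GKMA by blast
  next
    case False
    obtain q r where qr: "d - ?M - 1 = q * ?P + r" "0 \<le> q" "0 \<le> r" "r < ?P"
      using quotient_remainder_nonneg[of ?P "d - ?M - 1"] False \<open>0 \<le> ?M\<close> by auto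
    have "q * ?P < int N3 * ?P" using qr d by (simp only: atLeastAtMost_iff) linarith
    then have "q < int N3" using \<open>0 \<le> ?M\<close> by (simp add: mult_less_cancel_right add_pos_nonneg)
    obtain j x where "0 \<le> j" "j \<le> ?n" "x \<in> DCNA N1 N2" and jx: "r - ?M = j * ?n - x"
      using multiples_minus_DCNA_cover[of N2 N1 "r - ?M"] qr MCNA_eq[OF assms] by auto
    then have "j * ?n + q * ?P + (2 * ?M + 1) \<in> GKMA N1 N2 N3" "x \<in> GKMA N1 N2 N3"
      using \<open>0 \<le> q\<close> \<open>q < int N3\<close> DCNA_GKMA unfolding mem_GKMA_iff by blast+
    moreover have "d = (j * ?n + q * ?P + (2 * ?M + 1)) - x" using qr(1) jx by simp
    ultimately show ?thesis unfolding setdiff_def by blast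
  qed
qed

theorem mainTheorem13:
  fixes N1 N2 N3 :: nat
  assumes "(N1, N2) \<noteq> (0, 0)"
  shows "setdiff (GKMA N1 N2 N3) (GKMA N1 N2 N3) = {- Max (GKMA N1 N2 N3) .. Max (GKMA N1 N2 N3)}"
  using GKMA_subset[OF assms] top_mem_GKMA[OF assms] GKMA_differences_cover[OF assms]
  by (rule setdiff_self_eq_symmetric_interval)

end
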